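(* If a set $W\subseteq V$ (with $|W|\ge3$) can be generated from some connected pair, then there exists $X\supseteq W$ such that $D[X]$ is a directed sub-block, and there is a node $i\in W$ that is reachable from all other nodes both in $D[W]$ and in $D[X]$.
   Context: $D=(V,A)$ is a directed graph. $\mathrm{IN}(X)$ is the set of nodes from which some member of $X$ is reachable by a directed path ($X\subseteq\mathrm{IN}(X)$). For disjoint nonempty $X,Y,Z\subseteq V$, $f_E(X,Y,Z)=1$ iff $\mathrm{IN}(X)\cap\mathrm{IN}(Y)=\emptyset$ computed in $D-Z$; a node $j$ is dynamically partitioning relative to $k$ and $Y$ iff $f_E(\{k\},Y,\{j\})=1$. A connected pair is a set $\{i,j\}$ with $(i,j)\in A$ or $(j,i)\in A$. Generation: a set $W_n$ of size $n$ can be generated from a set $W_m$ of size $m$, $2\le m<n$, iff there are sets $W_m\subset W_{m+1}\subset\dots\subset W_n$ with $W_{l+1}=W_l\cup\{k\}$ for a single node $k\in V\setminus W_l$ such that there is an arc from $k$ to some $j\in W_l$ which is not dynamically partitioning relative to $k$ and $W_l\setminus\{j\}$. $D[W]$ is the subgraph induced on $W$. "Reachable in $D[W]$" means via a directed path inside $D[W]$. A graph is biconnected if it has at least three vertices, is connected, and stays connected after deleting any single vertex. $D[X]$ is a directed sub-block if some node of $X$ is reachable within $D[X]$ from every other node of $X$ and the underlying undirected graph of $D[X]$ is biconnected. *)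

theory Defs
  imports Main
begin

definition induced_arcs :: "('a \<times> 'a) set \<Rightarrow> 'a set \<Rightarrow> ('a \<times> 'a) set" where
  "induced_arcs A S = A \<inter> (S \<times> S)"

definition IN_minus :: "'a set \<Rightarrow> ('a \<times> 'a) set \<Rightarrow> 'a set \<Rightarrow> 'a set \<Rightarrow> 'a set" where
  "IN_minus V A Z X = {u \<in> V - Z. \<exists>x\<in>X. (u, x) \<in> (induced_arcs A (V - Z))\<^sup>*}"

definition f_E :: "'a set \<Rightarrow> ('a \<times> 'a) set \<Rightarrow> 'a set \<Rightarrow> 'a set \<Rightarrow> 'a set \<Rightarrow> bool" where
  "f_E V A X Y Z \<longleftrightarrow> IN_minus V A Z X \<inter> IN_minus V A Z Y = {}"

definition dyn_partitioning :: "'a set \<Rightarrow> ('a \<times> 'a) set \<Rightarrow> 'a \<Rightarrow> 'a \<Rightarrow> 'a set \<Rightarrow> bool" where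
  "dyn_partitioning V A j k Y \<longleftrightarrow> f_E V A {k} Y {j}"

definition connected_pair :: "('a \<times> 'a) set \<Rightarrow> 'a set \<Rightarrow> bool" where
  "connected_pair A P \<longleftrightarrow> (\<exists>i j. i \<noteq> j \<and> P = {i, j} \<and> ((i, j) \<in> A \<or> (j, i) \<in> A))"

definition gen_step :: "'a set \<Rightarrow> ('a \<times> 'a) set \<Rightarrow> 'a set \<Rightarrow> 'a set \<Rightarrow> bool" where
  "gen_step V A W W' \<longleftrightarrow> (\<exists>k \<in> V - W. W' = insert k W \<and>
      (\<exists>j\<in>W. (k, j) \<in> A \<and> \<not> dyn_partitioning V A j k (W - {j})))"

inductive generated :: "'a set \<Rightarrow> ('a \<times> 'a) set \<Rightarrow> 'a set \<Rightarrow> 'a set \<Rightarrow> bool"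
  for V A W0 where
  gen_refl: "generated V A W0 W0"
| gen_step: "generated V A W0 W \<Longrightarrow> gen_step V A W W' \<Longrightarrow> generated V A W0 W'"

definition can_be_generated_from :: "'a set \<Rightarrow> ('a \<times> 'a) set \<Rightarrow> 'a set \<Rightarrow> 'a set \<Rightarrow> bool" where
  "can_be_generated_from V A W0 W \<longleftrightarrow>
     2 \<le> card W0 \<and> card W0 < card W \<and> generated V A W0 W"

definition und_connected :: "('a \<times> 'a) set \<Rightarrow> 'a set \<Rightarrow> bool" where
  "und_connected A S \<longleftrightarrow>
     (\<forall>u\<in>S. \<forall>v\<in>S. (u, v) \<in> (induced_arcs (A \<union> A\<inverse>) S)\<^sup>*)"

definition und_biconnected :: "('a \<times> 'a) set \<Rightarrow> 'a set \<Rightarrow> bool" where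
  "und_biconnected A S \<longleftrightarrow> finite S \<and> 3 \<le> card S \<and> und_connected A S \<and>
     (\<forall>v\<in>S. und_connected A (S - {v}))"

definition directed_sub_block :: "('a \<times> 'a) set \<Rightarrow> 'a set \<Rightarrow> bool" where
  "directed_sub_block A X \<longleftrightarrow>
     (\<exists>r\<in>X. \<forall>u\<in>X. (u, r) \<in> (induced_arcs A X)\<^sup>*) \<and> und_biconnected A X"

end

theory Submission
  imports Defs
begin

text \<open>Induct along the generation sequence, carrying a root r of D[W] together with a set
  X \<supseteq> W whose underlying graph is two-connected and in which every node reaches r.
  When k joins W through an arc (k, j), the fact that j does not partition k from W - {j}
  gives a node u reaching both k and some w \<noteq> j of W while avoiding j. If k \<notin> X, this
  yields nodes outside X that all reach X and join k to X at a second point z \<noteq> j; a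
  minimal such set N is an ear of X, so X \<union> N is again two-connected and still rooted at r.\<close>

abbreviation reaches_in :: "('a \<times> 'a) set \<Rightarrow> 'a set \<Rightarrow> 'a \<Rightarrow> 'a \<Rightarrow> bool" where
  "reaches_in A S x y \<equiv> (x, y) \<in> (induced_arcs A S)\<^sup>*"

lemma reaches_in_mono_set: "S \<subseteq> T \<Longrightarrow> reaches_in A S x y \<Longrightarrow> reaches_in A T x y"
  by (erule rtrancl_mono[THEN subsetD, rotated]) (auto simp: induced_arcs_def)

lemma reaches_in_mono_arcs: "A \<subseteq> B \<Longrightarrow> reaches_in A S x y \<Longrightarrow> reaches_in B S x y"
  by (erule rtrancl_mono[THEN subsetD, rotated]) (auto simp: induced_arcs_def)

lemma reaches_in_und: "reaches_in A S x y \<Longrightarrow> reaches_in (A \<union> A\<inverse>) S x y"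
  by (rule reaches_in_mono_arcs) auto

lemma reaches_in_endpoints: "reaches_in A S x y \<Longrightarrow> x = y \<or> x \<in> S \<and> y \<in> S"
  by (induction rule: rtrancl_induct) (auto simp: induced_arcs_def)

lemma reaches_in_und_sym: "reaches_in (A \<union> A\<inverse>) S x y \<Longrightarrow> reaches_in (A \<union> A\<inverse>) S y x"
proof (induction rule: rtrancl_induct)
  case (step y z)
  then have "(z, y) \<in> induced_arcs (A \<union> A\<inverse>) S" by (auto simp: induced_arcs_def)
  then show ?case using step.IH by (rule converse_rtrancl_into_rtrancl)
qed simp

lemma und_connected_extend:
  assumes "und_connected A Y" "Y \<subseteq> T"
    and "\<And>t. t \<in> T - Y \<Longrightarrow> \<exists>y\<in>Y. reaches_in (A \<union> A\<inverse>) T t y"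
  shows "und_connected A T"
  unfolding und_connected_def
proof (intro ballI)
  fix p q assume "p \<in> T" "q \<in> T"
  have to_Y: "\<exists>y\<in>Y. reaches_in (A \<union> A\<inverse>) T t y" if "t \<in> T" for t
    using assms(3) that by (cases "t \<in> Y") auto
  obtain y1 y2 where y: "y1 \<in> Y" "y2 \<in> Y"
    and py1: "reaches_in (A \<union> A\<inverse>) T p y1" and qy2: "reaches_in (A \<union> A\<inverse>) T q y2"
    using to_Y \<open>p \<in> T\<close> \<open>q \<in> T\<close> by blast
  have "reaches_in (A \<union> A\<inverse>) T y1 y2"
    using assms(1,2) y unfolding und_connected_def by (blast intro: reaches_in_mono_set)
  then show "reaches_in (A \<union> A\<inverse>) T p q"
    using py1 reaches_in_und_sym[OF qy2] by (meson rtrancl_trans)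
qed

lemma reaches_in_escape:
  assumes "reaches_in R S a b" "b \<notin> C"
    and closed: "\<And>c d. c \<in> C \<Longrightarrow> d \<in> S \<Longrightarrow> (c, d) \<in> R \<or> (d, c) \<in> R \<Longrightarrow> d \<in> C \<or> d = v"
  shows "reaches_in R (S - C) (if a \<in> C then v else a) b"
  using assms(1)
proof (induction rule: converse_rtrancl_induct)
  case base
  then show ?case using assms(2) by simp
next
  case (step a a')
  then have arc: "(a, a') \<in> R" "a \<in> S" "a' \<in> S" by (auto simp: induced_arcs_def)
  consider "a \<in> C" "a' \<in> C" | "a \<in> C" "a' \<notin> C" | "a \<notin> C" "a' \<in> C" | "a \<notin> C" "a' \<notin> C"
    by blast
  then show ?case
  proof cases
    case 2
    then have "a' = v" using closed[of a a'] arc by blast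
    then show ?thesis using step.IH 2 by simp
  next
    case 3
    then have "a = v" using closed[of a' a] arc by blast
    then show ?thesis using step.IH 3 by simp
  next
    case 4
    then have "(a, a') \<in> induced_arcs R (S - C)" using arc by (simp add: induced_arcs_def)
    then show ?thesis using step.IH 4 by (simp add: converse_rtrancl_into_rtrancl)
  qed (use step.IH in simp)
qed

lemma reaches_in_last_exit:
  assumes "reaches_in A S u y" "y \<notin> X"
  shows "u \<notin> X \<and> reaches_in A (S - X) u y \<or>
    (\<exists>z\<in>X \<inter> S. \<exists>b. (z, b) \<in> A \<and> reaches_in A (S - X) b y)"
  using assms
proof (induction rule: rtrancl_induct)
  case (step y y')
  then have arc: "(y, y') \<in> A" "y \<in> S" "y' \<in> S" by (auto simp: induced_arcs_def)
  show ?case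
  proof (cases "y \<in> X")
    case True
    then show ?thesis using arc by blast
  next
    case False
    then have "(y, y') \<in> induced_arcs A (S - X)" using arc step.prems by (auto simp: induced_arcs_def)
    then show ?thesis using step.IH[OF False] by (blast intro: rtrancl_into_rtrancl)
  qed
qed simp

lemma reaches_in_first_entry:
  assumes "reaches_in A S u w" "w \<in> X" "u \<notin> X"
  shows "\<exists>m z. reaches_in A (S - X) u m \<and> m \<in> S - X \<and> (m, z) \<in> A \<and> z \<in> X \<inter> S"
  using assms(1,3)
proof (induction rule: converse_rtrancl_induct)
  case base
  then show ?case using assms(2) by simp
next
  case (step u u')
  then have arc: "(u, u') \<in> A" "u \<in> S" "u' \<in> S" by (auto simp: induced_arcs_def)
  show ?case
  proof (cases "u' \<in> X")
    case True
    then show ?thesis using arc step.prems by blast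
  next
    case False
    then have "(u, u') \<in> induced_arcs A (S - X)" using arc step.prems by (auto simp: induced_arcs_def)
    then show ?thesis using step.IH[OF False] by (meson converse_rtrancl_into_rtrancl)
  qed
qed

definition reaches_into :: "'a set \<Rightarrow> ('a \<times> 'a) set \<Rightarrow> 'a set \<Rightarrow> 'a set" where
  "reaches_into V A X =
     {n \<in> V - X. \<exists>m x. reaches_in A (V - X) n m \<and> (m, x) \<in> A \<and> x \<in> X}"

lemma reaches_into_path_closed:
  assumes "reaches_in A (V - X) a b" "b \<in> reaches_into V A X"
  shows "a \<in> reaches_into V A X \<and> reaches_in A (reaches_into V A X) a b"
  using assms(1)
proof (induction rule: converse_rtrancl_induct)
  case base
  then show ?case using assms(2) by simp
next
  case (step a a')
  then have arc: "(a, a') \<in> induced_arcs A (V - X)" and a'N: "a' \<in> reaches_into V A X" by simp_all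
  then have aN: "a \<in> reaches_into V A X"
    unfolding reaches_into_def by (auto simp: induced_arcs_def intro: converse_rtrancl_into_rtrancl)
  then have "(a, a') \<in> induced_arcs A (reaches_into V A X)"
    using arc a'N by (auto simp: induced_arcs_def)
  then show ?case using aN step.IH by (blast intro: converse_rtrancl_into_rtrancl)
qed

lemma reaches_into_reaches:
  assumes "n \<in> reaches_into V A X"
  shows "\<exists>x\<in>X. reaches_in A (X \<union> reaches_into V A X) n x"
proof -
  obtain m x where mx: "reaches_in A (V - X) n m" "(m, x) \<in> A" "x \<in> X"
    using assms unfolding reaches_into_def by blast
  have "m \<in> V - X" using reaches_in_endpoints[OF mx(1)] assms unfolding reaches_into_def by auto
  then have mN: "m \<in> reaches_into V A X" using mx unfolding reaches_into_def by blast
  then have "reaches_in A (X \<union> reaches_into V A X) n m"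
    using reaches_into_path_closed[OF mx(1)] by (blast intro: reaches_in_mono_set)
  moreover have "(m, x) \<in> induced_arcs A (X \<union> reaches_into V A X)"
    using mN mx by (auto simp: induced_arcs_def)
  ultimately show ?thesis using mx(3) by (blast intro: rtrancl_into_rtrancl)
qed

text \<open>Like und_biconnected but without the size condition, which fails for the
  connected pair the generation starts from.\<close>
definition two_connected :: "('a \<times> 'a) set \<Rightarrow> 'a set \<Rightarrow> bool" where
  "two_connected A X \<longleftrightarrow> und_connected A X \<and> (\<forall>v\<in>X. und_connected A (X - {v}))"

text \<open>Together with an arc (k, j), the undirected connection from k to z \<noteq> j makes N hang
  on X at two distinct points.\<close>
definition ear :: "'a set \<Rightarrow> ('a \<times> 'a) set \<Rightarrow> 'a set \<Rightarrow> 'a \<Rightarrow> 'a \<Rightarrow> 'a set \<Rightarrow> bool" where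
  "ear V A X j k N \<longleftrightarrow> N \<subseteq> V - X \<and> k \<in> N \<and>
     (\<forall>n\<in>N. \<exists>x\<in>X. reaches_in A (X \<union> N) n x) \<and>
     (\<exists>z\<in>X - {j}. reaches_in (A \<union> A\<inverse>) (N \<union> {z}) k z)"

lemma und_reaches_in_union_singleton:
  "reaches_in A N x y \<Longrightarrow>
    reaches_in (A \<union> A\<inverse>) (N \<union> {z}) x y \<and> reaches_in (A \<union> A\<inverse>) (N \<union> {z}) y x"
  by (meson reaches_in_und reaches_in_und_sym reaches_in_mono_set Un_upper1)

text \<open>Either the path from u to k avoids X, and then the path from u to w enters X for the
  first time at some z \<noteq> j, or it leaves X for the last time at some z \<noteq> j.\<close>
lemma reaches_into_attaches:
  assumes k: "k \<in> V - X" and kN: "k \<in> reaches_into V A X" and jX: "j \<in> X"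
    and uk: "reaches_in A (V - {j}) u k"
    and uw: "reaches_in A (V - {j}) u w" and w: "w \<in> X - {j}"
  shows "\<exists>z\<in>X - {j}. reaches_in (A \<union> A\<inverse>) (reaches_into V A X \<union> {z}) k z"
proof -
  let ?N = "reaches_into V A X"
  have outside: "V - {j} - X = V - X" using jX by blast
  consider "u \<notin> X" "reaches_in A (V - X) u k"
    | z b where "z \<in> X - {j}" "(z, b) \<in> A" "reaches_in A (V - X) b k"
    using reaches_in_last_exit[OF uk, of X, unfolded outside] k by blast
  then show ?thesis
  proof cases
    case 1
    then obtain m z where mz: "reaches_in A (V - X) u m" "m \<in> V - X" "(m, z) \<in> A" "z \<in> X - {j}"
      using reaches_in_first_entry[OF uw, of X, unfolded outside] w by blast
    have mN: "m \<in> ?N" using mz unfolding reaches_into_def by auto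
    have "reaches_in A ?N u k" "reaches_in A ?N u m"
      using reaches_into_path_closed[OF 1(2) kN] reaches_into_path_closed[OF mz(1) mN] by simp_all
    then have "reaches_in (A \<union> A\<inverse>) (?N \<union> {z}) k u" "reaches_in (A \<union> A\<inverse>) (?N \<union> {z}) u m"
      by (meson und_reaches_in_union_singleton)+
    moreover have "(m, z) \<in> induced_arcs (A \<union> A\<inverse>) (?N \<union> {z})"
      using mN mz by (auto simp: induced_arcs_def)
    ultimately show ?thesis using mz(4) by (meson rtrancl_trans rtrancl_into_rtrancl)
  next
    case (2 z b)
    then have bN: "b \<in> ?N" and "reaches_in A ?N b k"
      using reaches_into_path_closed[OF 2(3) kN] by simp_all
    then have "reaches_in (A \<union> A\<inverse>) (?N \<union> {z}) k b"
      by (meson und_reaches_in_union_singleton)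
    moreover have "(b, z) \<in> induced_arcs (A \<union> A\<inverse>) (?N \<union> {z})"
      using bN 2 by (auto simp: induced_arcs_def)
    ultimately show ?thesis using 2(1) by (meson rtrancl_into_rtrancl)
  qed
qed

lemma reaches_into_is_ear:
  assumes k: "k \<in> V - X" and kj: "(k, j) \<in> A" and jX: "j \<in> X"
    and uk: "reaches_in A (V - {j}) u k"
    and uw: "reaches_in A (V - {j}) u w" and w: "w \<in> X - {j}"
  shows "ear V A X j k (reaches_into V A X)"
proof -
  have kN: "k \<in> reaches_into V A X" using k kj jX unfolding reaches_into_def by auto
  have "reaches_into V A X \<subseteq> V - X" by (auto simp: reaches_into_def)
  then show ?thesis
    unfolding ear_def
    using kN reaches_into_attaches[OF k kN jX uk uw w] reaches_into_reaches
    by (intro conjI ballI) simp_all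
qed

lemma ear_remove_component:
  assumes ear: "ear V A X j k N" and CX: "C \<inter> X = {}" and kC: "k \<notin> C"
    and closed: "\<And>c d. c \<in> C \<Longrightarrow> d \<in> X \<union> N \<Longrightarrow> (c, d) \<in> A \<or> (d, c) \<in> A \<Longrightarrow> d \<in> C \<or> d = v"
  shows "ear V A X j k (N - C)"
proof -
  from ear have NX: "N \<subseteq> V - X" and kN: "k \<in> N"
    and hang: "\<forall>n\<in>N. \<exists>x\<in>X. reaches_in A (X \<union> N) n x"
    and att: "\<exists>z\<in>X - {j}. reaches_in (A \<union> A\<inverse>) (N \<union> {z}) k z"
    unfolding ear_def by blast+
  have "\<exists>x\<in>X. reaches_in A (X \<union> (N - C)) n x" if n: "n \<in> N - C" for n
  proof -
    obtain x where x: "x \<in> X" "reaches_in A (X \<union> N) n x" using hang n by blast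
    then have "reaches_in A (X \<union> N - C) n x"
      using reaches_in_escape[OF x(2), of C v] CX closed n by auto
    moreover have "X \<union> N - C = X \<union> (N - C)" using CX by blast
    ultimately show ?thesis using x(1) by auto
  qed
  moreover have "\<exists>z\<in>X - {j}. reaches_in (A \<union> A\<inverse>) (N - C \<union> {z}) k z"
  proof -
    obtain z where z: "z \<in> X - {j}" "reaches_in (A \<union> A\<inverse>) (N \<union> {z}) k z" using att by blast
    have "d \<in> C \<or> d = v"
      if "c \<in> C" "d \<in> N \<union> {z}" "(c, d) \<in> A \<union> A\<inverse> \<or> (d, c) \<in> A \<union> A\<inverse>" for c d
      using closed[of c d] that z by blast
    then have "reaches_in (A \<union> A\<inverse>) (N \<union> {z} - C) k z"
      using reaches_in_escape[OF z(2), of C v] z CX kC by auto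
    moreover have "N \<union> {z} - C = N - C \<union> {z}" using z CX by blast
    ultimately show ?thesis using z(1) by auto
  qed
  ultimately show ?thesis unfolding ear_def using NX kN kC by blast
qed

text \<open>In a minimal ear no vertex v cuts a node of N off from X - {v}: otherwise the component
  C of that node in X \<union> N - {v} misses X and k, and N - C would be a smaller ear.\<close>
lemma minimal_ear_avoids_cut_vertex:
  assumes ear: "ear V A X j k N" and min: "\<And>N'. ear V A X j k N' \<Longrightarrow> card N \<le> card N'"
    and fin: "finite N" and kj: "(k, j) \<in> A" and jX: "j \<in> X" and n: "n \<in> N - {v}"
  shows "\<exists>x\<in>X - {v}. reaches_in (A \<union> A\<inverse>) (X \<union> N - {v}) n x"
proof (rule ccontr)
  assume cut: "\<not> ?thesis"
  define C where "C = {c. reaches_in (A \<union> A\<inverse>) (X \<union> N - {v}) n c}"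
  have "C \<subseteq> X \<union> N - {v}"
    using n reaches_in_endpoints unfolding C_def by fastforce
  then have CX: "C \<inter> X = {}" using cut unfolding C_def by blast
  have closed: "d \<in> C \<or> d = v" if "c \<in> C" "d \<in> X \<union> N" "(c, d) \<in> A \<or> (d, c) \<in> A" for c d
  proof (cases "d = v")
    case False
    then have "(c, d) \<in> induced_arcs (A \<union> A\<inverse>) (X \<union> N - {v})"
      using that \<open>C \<subseteq> X \<union> N - {v}\<close> by (auto simp: induced_arcs_def)
    then show ?thesis using that(1) unfolding C_def by (blast intro: rtrancl_into_rtrancl)
  qed simp
  obtain z where z: "z \<in> X - {j}" "reaches_in (A \<union> A\<inverse>) (N \<union> {z}) k z" and NX: "N \<subseteq> V - X"
    using ear unfolding ear_def by blast
  have kC: "k \<notin> C"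
  proof
    assume kC: "k \<in> C"
    show False
    proof (cases "v = j")
      case True
      have "reaches_in (A \<union> A\<inverse>) (X \<union> N - {v}) k z"
        by (rule reaches_in_mono_set[OF _ z(2)]) (use z NX jX True in auto)
      then have "z \<in> C" using kC unfolding C_def by (blast intro: rtrancl_trans)
      then show False using CX z by blast
    next
      case False
      then have "j \<in> C" using closed[of k j] kC jX kj by blast
      then show False using CX jX by blast
    qed
  qed
  have "card (N - C) < card N"
    using fin n unfolding C_def by (intro psubset_card_mono) auto
  then show False
    using min[OF ear_remove_component[OF ear CX kC closed]] by simp
qed

lemma minimal_ear_two_connected:
  assumes X: "two_connected A X" and ear: "ear V A X j k N"
    and min: "\<And>N'. ear V A X j k N' \<Longrightarrow> card N \<le> card N'"
    and fin: "finite N" and kj: "(k, j) \<in> A" and jX: "j \<in> X"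
  shows "two_connected A (X \<union> N)"
  unfolding two_connected_def
proof
  have "N \<subseteq> V - X" and hang: "\<forall>n\<in>N. \<exists>x\<in>X. reaches_in A (X \<union> N) n x"
    using ear by (simp_all add: ear_def)
  then have NX: "N \<inter> X = {}" by blast
  show "und_connected A (X \<union> N)"
  proof (rule und_connected_extend[of A X])
    show "und_connected A X" using X by (simp add: two_connected_def)
    fix t assume "t \<in> X \<union> N - X"
    then have "t \<in> N" by blast
    then show "\<exists>y\<in>X. reaches_in (A \<union> A\<inverse>) (X \<union> N) t y" using hang reaches_in_und by metis
  qed blast
  show "\<forall>v\<in>X \<union> N. und_connected A (X \<union> N - {v})"
  proof
    fix v
    show "und_connected A (X \<union> N - {v})"
    proof (rule und_connected_extend[of A "X - {v}"])
      show "und_connected A (X - {v})"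
        using X by (cases "v \<in> X") (simp_all add: two_connected_def)
      fix t assume "t \<in> X \<union> N - {v} - (X - {v})"
      then have "t \<in> N - {v}" using NX by blast
      then show "\<exists>y\<in>X - {v}. reaches_in (A \<union> A\<inverse>) (X \<union> N - {v}) t y"
        using minimal_ear_avoids_cut_vertex[OF ear min fin kj jX] by metis
    qed blast
  qed
qed

lemma two_connected_ear_extension:
  assumes "finite V" and X: "two_connected A X" and k: "k \<in> V - X"
    and kj: "(k, j) \<in> A" and jX: "j \<in> X"
    and uk: "reaches_in A (V - {j}) u k"
    and uw: "reaches_in A (V - {j}) u w" and w: "w \<in> X - {j}"
  shows "\<exists>N. k \<in> N \<and> N \<subseteq> V \<and> two_connected A (X \<union> N) \<and>
           (\<forall>n\<in>N. \<exists>x\<in>X. reaches_in A (X \<union> N) n x)"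
proof -
  obtain N where ear: "ear V A X j k N" and min: "\<And>N'. ear V A X j k N' \<Longrightarrow> card N \<le> card N'"
    using ex_has_least_nat[of "ear V A X j k" _ card] reaches_into_is_ear[OF k kj jX uk uw w]
    by metis
  have NV: "N \<subseteq> V - X" and "k \<in> N" and "\<forall>n\<in>N. \<exists>x\<in>X. reaches_in A (X \<union> N) n x"
    using ear by (simp_all add: ear_def)
  moreover have "finite N" using NV \<open>finite V\<close> by (meson Diff_subset finite_subset subset_trans)
  then have "two_connected A (X \<union> N)" using minimal_ear_two_connected[OF X ear min _ kj jX] by metis
  ultimately show ?thesis by blast
qed

lemma reaches_root_ear:
  assumes "\<forall>x\<in>X. reaches_in A X x r" and "\<forall>n\<in>N. \<exists>x\<in>X. reaches_in A (X \<union> N) n x"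
  shows "\<forall>y\<in>X \<union> N. reaches_in A (X \<union> N) y r"
proof
  fix y assume "y \<in> X \<union> N"
  then obtain x where "x \<in> X" "reaches_in A (X \<union> N) y x"
    using assms(2) by (metis UnE rtrancl.rtrancl_refl)
  moreover have "reaches_in A (X \<union> N) x r"
    using assms(1) \<open>x \<in> X\<close> by (meson Un_upper1 reaches_in_mono_set)
  ultimately show "reaches_in A (X \<union> N) y r" by (meson rtrancl_trans)
qed

lemma reaches_root_insert:
  assumes "\<forall>u\<in>W. reaches_in A W u r" and "j \<in> W" and "(k, j) \<in> A"
  shows "\<forall>u\<in>insert k W. reaches_in A (insert k W) u r"
proof -
  have W: "reaches_in A (insert k W) u r" if "u \<in> W" for u
    using assms(1) that by (meson subset_insertI reaches_in_mono_set)
  have "(k, j) \<in> induced_arcs A (insert k W)"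
    using assms(2,3) by (simp add: induced_arcs_def)
  then have "reaches_in A (insert k W) k r"
    using W[OF assms(2)] by (rule converse_rtrancl_into_rtrancl)
  then show ?thesis by (simp add: W)
qed

lemma not_dyn_partitioning_iff:
  "\<not> dyn_partitioning V A j k Y \<longleftrightarrow>
     (\<exists>u\<in>V - {j}. reaches_in A (V - {j}) u k \<and> (\<exists>w\<in>Y. reaches_in A (V - {j}) u w))"
  by (auto simp: dyn_partitioning_def f_E_def IN_minus_def)

lemma connected_pair_rooted:
  assumes "connected_pair A P" and "A \<subseteq> V \<times> V"
  shows "\<exists>r\<in>P. (\<forall>u\<in>P. reaches_in A P u r) \<and> P \<subseteq> V \<and> two_connected A P"
proof -
  obtain r s where rs: "P = {r, s}" "(s, r) \<in> A" "r \<noteq> s"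
    using assms(1) unfolding connected_pair_def by (metis insert_commute)
  have "(s, r) \<in> induced_arcs A P" "(s, r) \<in> induced_arcs (A \<union> A\<inverse>) P"
    "(r, s) \<in> induced_arcs (A \<union> A\<inverse>) P"
    using rs by (auto simp: induced_arcs_def)
  then have "\<forall>u\<in>P. reaches_in A P u r" and "und_connected A P"
    using rs unfolding und_connected_def by auto
  moreover have "\<forall>v\<in>P. und_connected A (P - {v})"
    using rs unfolding und_connected_def by auto
  ultimately show ?thesis
    using rs assms(2) unfolding two_connected_def by auto
qed

lemma generated_rooted_hull:
  assumes "generated V A P W" and "finite V" and "A \<subseteq> V \<times> V" and "connected_pair A P"
  shows "\<exists>r\<in>W. (\<forall>u\<in>W. reaches_in A W u r) \<and>
    (\<exists>X. W \<subseteq> X \<and> X \<subseteq> V \<and> two_connected A X \<and> (\<forall>x\<in>X. reaches_in A X x r))"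
  using assms(1)
proof (induction rule: generated.induct)
  case gen_refl
  then show ?case using connected_pair_rooted[OF assms(4,3)] by blast
next
  case (gen_step W W')
  then obtain r X where r: "r \<in> W" "\<forall>u\<in>W. reaches_in A W u r"
    and X: "W \<subseteq> X" "X \<subseteq> V" "two_connected A X" "\<forall>x\<in>X. reaches_in A X x r"
    by blast
  from gen_step.hyps(2) obtain k j where k: "k \<in> V - W" "W' = insert k W"
    and j: "j \<in> W" "(k, j) \<in> A" and "\<not> dyn_partitioning V A j k (W - {j})"
    unfolding gen_step_def by blast
  then obtain u w where uk: "reaches_in A (V - {j}) u k"
    and uw: "reaches_in A (V - {j}) u w" and w: "w \<in> W - {j}"
    unfolding not_dyn_partitioning_iff by blast
  have root': "\<forall>u\<in>W'. reaches_in A W' u r" using reaches_root_insert[OF r(2) j] k(2) by simp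
  show ?case
  proof (cases "k \<in> X")
    case True
    then show ?thesis using root' X r k by blast
  next
    case False
    then obtain N where N: "k \<in> N" "N \<subseteq> V" "two_connected A (X \<union> N)"
      "\<forall>n\<in>N. \<exists>x\<in>X. reaches_in A (X \<union> N) n x"
      using two_connected_ear_extension[OF assms(2) X(3) _ j(2) _ uk uw] k X(1,2) j(1) w
      by blast
    then have "W' \<subseteq> X \<union> N" "X \<union> N \<subseteq> V" using k X by auto
    then show ?thesis using root' r k N reaches_root_ear[OF X(4) N(4)] by blast
  qed
qed

theorem mainTheorem5:
  fixes V :: "'a set" and A :: "('a \<times> 'a) set" and W :: "'a set"
  assumes "finite V"
    and "A \<subseteq> V \<times> V"
    and "W \<subseteq> V"
    and "3 \<le> card W"
    and "\<exists>P. connected_pair A P \<and> can_be_generated_from V A P W"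
  shows "\<exists>X. W \<subseteq> X \<and> X \<subseteq> V \<and> directed_sub_block A X \<and>
           (\<exists>i\<in>W. (\<forall>u\<in>W. (u, i) \<in> (induced_arcs A W)\<^sup>*) \<and>
                   (\<forall>u\<in>X. (u, i) \<in> (induced_arcs A X)\<^sup>*))"
proof -
  obtain P where "connected_pair A P" "generated V A P W"
    using assms(5) unfolding can_be_generated_from_def by blast
  then obtain r X where r: "r \<in> W" "\<forall>u\<in>W. reaches_in A W u r"
    and X: "W \<subseteq> X" "X \<subseteq> V" "two_connected A X" "\<forall>x\<in>X. reaches_in A X x r"
    using generated_rooted_hull assms(1,2) by blast
  have "finite X" using X(2) assms(1) by (rule finite_subset)
  moreover have "3 \<le> card X" using card_mono[OF \<open>finite X\<close> X(1)] assms(4) by simp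
  ultimately have "directed_sub_block A X"
    using X r(1) unfolding directed_sub_block_def und_biconnected_def two_connected_def by blast
  then show ?thesis using X r by blast
qed

end
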